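(* Let $\Gamma$ be a nonempty set and $\mathcal{S}$ a family of subsets of $\Gamma$ containing all singletons of $\Gamma$. For $s\in\mathcal{S}$ let $s^*\in J\mathcal{S}^*$ be the functional determined by $s^*(\phi)=\sum_{a\in s}\phi(a)$ for finitely supported $\phi$, and let $D=\{\sum_{i=1}^n\lambda_i s_i^*: n\in\mathbb{N},\ \lambda_i\in\mathbb{R},\ s_i\in\mathcal{S},\ s_1,\dots,s_n \text{ pairwise disjoint},\ \sum_{i=1}^n\lambda_i^2\le1\}$. Then the $w^*$-closure of $D$ contains all extreme points of the closed unit ball of $J\mathcal{S}^*$.
   Context: For a finitely supported function $\phi:\Gamma\to\mathbb{R}$, the James-$\mathcal{S}$ norm is $\|\phi\|=\sup\big(\sum_{i=1}^n(\sum_{a\in s_i}\phi(a))^2\big)^{1/2}$, the supremum over all finite families of pairwise disjoint elements $s_1,\dots,s_n$ of $\mathcal{S}$; $J\mathcal{S}$ is the completion of the finitely supported real functions on $\Gamma$ in this norm. One has $\|s^*\|\le1$ and $D$ lies in the unit ball of $J\mathcal{S}^*$. *)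

theory Defs
  imports "HOL-Analysis.Analysis"
begin

text \<open>The index set Gamma is the (nonempty) type 'a.  Finitely supported functions.\<close>
definition supp :: "('a \<Rightarrow> real) \<Rightarrow> 'a set" where
  "supp \<phi> = {a. \<phi> a \<noteq> 0}"

definition fin_supp :: "('a \<Rightarrow> real) \<Rightarrow> bool" where
  "fin_supp \<phi> \<longleftrightarrow> finite (supp \<phi>)"

definition setsum :: "('a \<Rightarrow> real) \<Rightarrow> 'a set \<Rightarrow> real" where
  "setsum \<phi> s = sum \<phi> (s \<inter> supp \<phi>)"

definition js_norm :: "'a set set \<Rightarrow> ('a \<Rightarrow> real) \<Rightarrow> real" where
  "js_norm S \<phi> = sqrt (Sup {(\<Sum>i<n. (setsum \<phi> (s i))\<^sup>2) | (n::nat) s.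
       (\<forall>i<n. s i \<in> S) \<and> (\<forall>i<n. \<forall>j<n. i \<noteq> j \<longrightarrow> s i \<inter> s j = {})})"

text \<open>A functional f on JS is identified with g a = f(e_a); then f(phi) = pairing g phi for
  finitely supported phi, and g determines f since finitely supported functions are dense. \<close>
definition pairing :: "('a \<Rightarrow> real) \<Rightarrow> ('a \<Rightarrow> real) \<Rightarrow> real" where
  "pairing g \<phi> = sum (\<lambda>a. g a * \<phi> a) (supp \<phi>)"

definition dual_ball :: "'a set set \<Rightarrow> ('a \<Rightarrow> real) set" where
  "dual_ball S = {g. \<forall>\<phi>. fin_supp \<phi> \<longrightarrow> \<bar>pairing g \<phi>\<bar> \<le> js_norm S \<phi>}"

text \<open>s* corresponds to the indicator function of s.  The set D: \<close>
definition D_set :: "'a set set \<Rightarrow> ('a \<Rightarrow> real) set" where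
  "D_set S = {(\<lambda>a. \<Sum>i<n. lam i * indicator (s i) a) | (n::nat) lam s.
       (\<forall>i<n. s i \<in> S) \<and> (\<forall>i<n. \<forall>j<n. i \<noteq> j \<longrightarrow> s i \<inter> s j = {}) \<and>
       (\<Sum>i<n. (lam i)\<^sup>2) \<le> 1}"

definition extreme_pt :: "('a \<Rightarrow> real) \<Rightarrow> ('a \<Rightarrow> real) set \<Rightarrow> bool" where
  "extreme_pt x K \<longleftrightarrow> x \<in> K \<and>
     (\<forall>y\<in>K. \<forall>z\<in>K. \<forall>t::real. 0 < t \<and> t < 1 \<and> x = (\<lambda>a. t * y a + (1 - t) * z a)
        \<longrightarrow> y = x \<and> z = x)"

text \<open>weak-star closure: on bounded subsets of JS* (D lies in the dual unit ball) the weak-star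
  topology coincides with pointwise convergence on Gamma, i.e. the product topology on 'a => real.\<close>

end

theory Submission
  imports Defs
begin

text \<open>
  For finitely supported phi, js_norm phi is the supremum of pairing d phi over d \<in> D. Separating a
  point from a compact convex set by a functional supported on finitely many coordinates (take the
  nearest point in those coordinates) therefore shows that the dual ball B is the smallest compact
  convex set containing D, for the topology of pointwise convergence, in which B is compact.
  Milman's converse of the Krein-Milman theorem then puts the extreme points of B into the closure
  of D: cover that closure by finitely many small compact convex pieces of B; the convex hull of
  their union is compact and contains D, hence B, and an extreme point of B in this hull lies in
  one of the pieces.
\<close>

abbreviation mix :: "real \<Rightarrow> ('a \<Rightarrow> real) \<Rightarrow> ('a \<Rightarrow> real) \<Rightarrow> 'a \<Rightarrow> real" where
  "mix t x y \<equiv> \<lambda>a. t * x a + (1 - t) * y a"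

text \<open>The library has no vector space structure on functions, so convexity is stated pointwise.\<close>

definition fun_convex :: "('a \<Rightarrow> real) set \<Rightarrow> bool" where
  "fun_convex M \<longleftrightarrow> (\<forall>x\<in>M. \<forall>y\<in>M. \<forall>t. 0 \<le> t \<and> t \<le> 1 \<longrightarrow> mix t x y \<in> M)"

lemma fun_convexD:
  "fun_convex M \<Longrightarrow> x \<in> M \<Longrightarrow> y \<in> M \<Longrightarrow> 0 \<le> t \<Longrightarrow> t \<le> 1 \<Longrightarrow> mix t x y \<in> M"
  unfolding fun_convex_def by blast

lemma fun_convex_empty: "fun_convex {}"
  unfolding fun_convex_def by simp

lemma fun_convex_Int: "fun_convex A \<Longrightarrow> fun_convex B \<Longrightarrow> fun_convex (A \<inter> B)"
  unfolding fun_convex_def by blast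

lemma abs_convex_combination_le:
  fixes t u v r :: real
  assumes "0 \<le> t" "t \<le> 1" "\<bar>u\<bar> \<le> r" "\<bar>v\<bar> \<le> r"
  shows "\<bar>t * u + (1 - t) * v\<bar> \<le> r"
proof -
  have "\<bar>t * u + (1 - t) * v\<bar> \<le> t * \<bar>u\<bar> + (1 - t) * \<bar>v\<bar>"
    using assms(1,2) by (metis abs_mult abs_of_nonneg abs_triangle_ineq diff_ge_0_iff_ge)
  also have "\<dots> \<le> r"
    using assms by (intro convex_bound_le) auto
  finally show ?thesis .
qed

lemma compact_imp_closed_fun:
  fixes M :: "('a \<Rightarrow> 'b::t2_space) set"
  assumes "compact M"
  shows "closed M"
proof -
  have "Hausdorff_space (euclidean :: 'b topology)"
    unfolding Hausdorff_space_def by (simp add: separation_t2 disjnt_def)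
  then have "Hausdorff_space (product_topology (\<lambda>_::'a. euclidean :: 'b topology) UNIV)"
    by (simp add: Hausdorff_space_product_topology)
  moreover have "compactin (product_topology (\<lambda>_::'a. euclidean :: 'b topology) UNIV) M"
    using assms by (simp add: euclidean_product_topology)
  ultimately show ?thesis
    using compactin_imp_closedin by (fastforce simp: euclidean_product_topology)
qed

definition coord_ball :: "'a set \<Rightarrow> ('a \<Rightarrow> real) \<Rightarrow> real \<Rightarrow> ('a \<Rightarrow> real) set" where
  "coord_ball F x r = {y. \<forall>a\<in>F. \<bar>y a - x a\<bar> < r}"

definition coord_cball :: "'a set \<Rightarrow> ('a \<Rightarrow> real) \<Rightarrow> real \<Rightarrow> ('a \<Rightarrow> real) set" where
  "coord_cball F x r = {y. \<forall>a\<in>F. \<bar>y a - x a\<bar> \<le> r}"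

lemma open_coord_ball:
  assumes "finite F"
  shows "open (coord_ball F x r)"
proof -
  have "coord_ball F x r = (\<Inter>a\<in>F. {y. \<bar>y a - x a\<bar> < r})"
    by (auto simp: coord_ball_def)
  moreover have "open {y::'a \<Rightarrow> real. \<bar>y a - x a\<bar> < r}" for a
    by (intro open_Collect_less continuous_intros continuous_on_product_then_coordinatewise
        continuous_on_id)
  ultimately show ?thesis
    using assms by auto
qed

lemma closed_coord_cball: "closed (coord_cball F x r)"
proof -
  have "coord_cball F x r = (\<Inter>a\<in>F. {y. \<bar>y a - x a\<bar> \<le> r})"
    by (auto simp: coord_cball_def)
  moreover have "closed {y::'a \<Rightarrow> real. \<bar>y a - x a\<bar> \<le> r}" for a
    by (intro closed_Collect_le continuous_intros continuous_on_product_then_coordinatewise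
        continuous_on_id)
  ultimately show ?thesis
    by auto
qed

lemma fun_convex_coord_cball: "fun_convex (coord_cball F x r)"
  unfolding fun_convex_def coord_cball_def
proof (intro ballI allI impI CollectI)
  fix y z :: "'a \<Rightarrow> real" and t :: real and a
  assume "y \<in> {y. \<forall>a\<in>F. \<bar>y a - x a\<bar> \<le> r}" "z \<in> {y. \<forall>a\<in>F. \<bar>y a - x a\<bar> \<le> r}"
    and "0 \<le> t \<and> t \<le> 1" and "a \<in> F"
  then have "\<bar>t * (y a - x a) + (1 - t) * (z a - x a)\<bar> \<le> r"
    by (intro abs_convex_combination_le) auto
  then show "\<bar>mix t y z a - x a\<bar> \<le> r"
    by (simp add: algebra_simps)
qed

lemma open_contains_coord_ball:
  assumes "open U" "g \<in> U"
  obtains F \<epsilon> where "finite F" "\<epsilon> > 0" "coord_ball F g \<epsilon> \<subseteq> U"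
proof -
  obtain X where X: "g \<in> Pi\<^sub>E UNIV X" "\<And>i. open (X i)" "finite {i. X i \<noteq> UNIV}"
    "Pi\<^sub>E UNIV X \<subseteq> U"
    using product_topology_open_contains_basis[of "\<lambda>_. euclidean" UNIV U g] assms
    unfolding open_fun_def by auto
  define F where "F = {i. X i \<noteq> UNIV}"
  have "\<forall>\<^sub>F \<epsilon> in at_right 0. ball (g i) \<epsilon> \<subseteq> X i" for i
  proof -
    obtain e where "e > 0" "ball (g i) e \<subseteq> X i"
      using X(1,2) open_contains_ball by (metis PiE_iff UNIV_I)
    then show ?thesis
      unfolding eventually_at_right_field by (meson order.strict_implies_order subset_ball order_trans)
  qed
  then have "\<forall>\<^sub>F \<epsilon> in at_right 0. 0 < \<epsilon> \<and> (\<forall>i\<in>F. ball (g i) \<epsilon> \<subseteq> X i)"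
    using X(3) unfolding F_def by (intro eventually_conj eventually_at_right_less eventually_ball_finite) auto
  then obtain \<epsilon> :: real where \<epsilon>: "0 < \<epsilon>" "\<And>i. i \<in> F \<Longrightarrow> ball (g i) \<epsilon> \<subseteq> X i"
    using eventually_happens'[OF trivial_limit_at_right_real] by blast
  have "coord_ball F g \<epsilon> \<subseteq> Pi\<^sub>E UNIV X"
  proof
    fix y assume y: "y \<in> coord_ball F g \<epsilon>"
    have "y i \<in> X i" for i
    proof (cases "i \<in> F")
      case True
      then have "y i \<in> ball (g i) \<epsilon>"
        using y by (simp add: coord_ball_def dist_real_def abs_minus_commute)
      then show ?thesis
        using \<epsilon>(2)[OF True] by blast
    qed (simp add: F_def)
    then show "y \<in> Pi\<^sub>E UNIV X"
      by (simp add: PiE_UNIV_domain)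
  qed
  then show ?thesis
    using that X(3,4) \<epsilon>(1) unfolding F_def by blast
qed

lemma weighted_sum_as_mix:
  fixes a b u v :: real
  assumes "0 \<le> a" "0 \<le> b"
  shows "a * u + b * v = (a + b) * (a / (a + b) * u + (1 - a / (a + b)) * v)"
proof (cases "a + b = 0")
  case True
  then show ?thesis
    using assms by (simp add: add_nonneg_eq_0_iff)
next
  case False
  then have "1 - a / (a + b) = b / (a + b)"
    by (simp add: field_simps)
  then show ?thesis
    using False by (simp add: distrib_left)
qed

lemma weight_ratio_bounds:
  fixes a b :: real
  assumes "0 \<le> a" "0 \<le> b"
  shows "0 \<le> a / (a + b)" "a / (a + b) \<le> 1"
  using assms by (auto simp: divide_le_eq_1)

text \<open>For nonempty convex M and C this is the convex hull of M \<union> C.\<close>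

definition mixes :: "('a \<Rightarrow> real) set \<Rightarrow> ('a \<Rightarrow> real) set \<Rightarrow> ('a \<Rightarrow> real) set" where
  "mixes M C = {mix t y c | t y c. t \<in> {0..1} \<and> y \<in> M \<and> c \<in> C}"

lemma mixesI: "t \<in> {0..1} \<Longrightarrow> y \<in> M \<Longrightarrow> c \<in> C \<Longrightarrow> mix t y c \<in> mixes M C"
  unfolding mixes_def by blast

lemma mixesE:
  assumes "x \<in> mixes M C"
  obtains t y c where "t \<in> {0..1}" "y \<in> M" "c \<in> C" "x = mix t y c"
  using assms unfolding mixes_def by blast

lemma compact_mixes:
  assumes "compact M" "compact C"
  shows "compact (mixes M C)"
proof -
  let ?f = "\<lambda>z. mix (fst z) (fst (snd z)) (snd (snd z))"
  have "mixes M C = ?f ` ({0..1} \<times> M \<times> C)"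
  proof
    show "mixes M C \<subseteq> ?f ` ({0..1} \<times> M \<times> C)"
    proof
      fix x assume "x \<in> mixes M C"
      then obtain t y c where "t \<in> {0..1}" "y \<in> M" "c \<in> C" "x = mix t y c"
        by (rule mixesE)
      then show "x \<in> ?f ` ({0..1} \<times> M \<times> C)"
        by (intro image_eqI[where x = "(t, y, c)"]) auto
    qed
    show "?f ` ({0..1} \<times> M \<times> C) \<subseteq> mixes M C"
      by (auto intro!: mixesI)
  qed
  moreover have "continuous_on ({0..1} \<times> M \<times> C) ?f"
    by (intro continuous_intros continuous_on_product_then_coordinatewise)
  ultimately show ?thesis
    using assms by (simp add: compact_continuous_image compact_Times)
qed

lemma fun_convex_mixes:
  assumes M: "fun_convex M" and C: "fun_convex C"
  shows "fun_convex (mixes M C)"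
  unfolding fun_convex_def
proof (intro ballI allI impI)
  fix z1 z2 and s :: real
  assume z1: "z1 \<in> mixes M C" and z2: "z2 \<in> mixes M C" and s: "0 \<le> s \<and> s \<le> 1"
  obtain t1 y1 c1 where t1: "t1 \<in> {0..1}" and y1: "y1 \<in> M" and c1: "c1 \<in> C"
    and z1_eq: "z1 = mix t1 y1 c1"
    using z1 by (rule mixesE)
  obtain t2 y2 c2 where t2: "t2 \<in> {0..1}" and y2: "y2 \<in> M" and c2: "c2 \<in> C"
    and z2_eq: "z2 = mix t2 y2 c2"
    using z2 by (rule mixesE)
  define T where "T = s * t1 + (1 - s) * t2"
  \<comment> \<open>If T = 0 (resp. T = 1) then \<alpha> (resp. \<beta>) is the junk value of a division by zero,
    which is harmless by weighted_sum_as_mix.\<close>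
  define \<alpha> where "\<alpha> = s * t1 / T"
  define \<beta> where "\<beta> = s * (1 - t1) / (1 - T)"
  have nonneg: "0 \<le> s * t1" "0 \<le> (1 - s) * t2" "0 \<le> s * (1 - t1)" "0 \<le> (1 - s) * (1 - t2)"
    using s t1 t2 by auto
  have one_minus_T: "1 - T = s * (1 - t1) + (1 - s) * (1 - t2)"
    unfolding T_def by (simp add: algebra_simps)
  have eq: "mix s z1 z2 = mix T (mix \<alpha> y1 y2) (mix \<beta> c1 c2)"
  proof
    fix a
    have "mix s z1 z2 a
        = (s * t1 * y1 a + (1 - s) * t2 * y2 a) + (s * (1 - t1) * c1 a + (1 - s) * (1 - t2) * c2 a)"
      unfolding z1_eq z2_eq by (simp add: algebra_simps)
    also have "\<dots> = T * (\<alpha> * y1 a + (1 - \<alpha>) * y2 a) + (1 - T) * (\<beta> * c1 a + (1 - \<beta>) * c2 a)"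
      using weighted_sum_as_mix[OF nonneg(1,2), of "y1 a" "y2 a", folded T_def]
        weighted_sum_as_mix[OF nonneg(3,4), of "c1 a" "c2 a", folded one_minus_T]
      unfolding \<alpha>_def \<beta>_def by simp
    finally show "mix s z1 z2 a = mix T (mix \<alpha> y1 y2) (mix \<beta> c1 c2) a" .
  qed
  have "T \<in> {0..1}"
    using nonneg one_minus_T unfolding T_def by auto
  moreover have "mix \<alpha> y1 y2 \<in> M"
    unfolding \<alpha>_def T_def by (rule fun_convexD[OF M y1 y2 weight_ratio_bounds[OF nonneg(1,2)]])
  moreover have "mix \<beta> c1 c2 \<in> C"
    unfolding \<beta>_def one_minus_T by (rule fun_convexD[OF C c1 c2 weight_ratio_bounds[OF nonneg(3,4)]])
  ultimately have "mix T (mix \<alpha> y1 y2) (mix \<beta> c1 c2) \<in> mixes M C"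
    by (rule mixesI)
  then show "mix s z1 z2 \<in> mixes M C"
    unfolding eq .
qed

lemma mixes_subset:
  assumes "fun_convex B" "M \<subseteq> B" "C \<subseteq> B"
  shows "mixes M C \<subseteq> B"
proof
  fix x assume "x \<in> mixes M C"
  then obtain t y c where "t \<in> {0..1}" "y \<in> M" "c \<in> C" and x_eq: "x = mix t y c"
    by (rule mixesE)
  then have "mix t y c \<in> B"
    using assms(2,3) by (intro fun_convexD[OF assms(1)]) auto
  then show "x \<in> B"
    unfolding x_eq .
qed

lemma subset_mixes:
  shows "C \<noteq> {} \<Longrightarrow> M \<subseteq> mixes M C" and "M \<noteq> {} \<Longrightarrow> C \<subseteq> mixes M C"
proof -
  show "M \<subseteq> mixes M C" if ne: "C \<noteq> {}"
  proof
    fix y assume "y \<in> M"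
    moreover obtain c where "c \<in> C" using ne by blast
    ultimately have "mix 1 y c \<in> mixes M C"
      by (intro mixesI) auto
    then show "y \<in> mixes M C"
      by simp
  qed
  show "C \<subseteq> mixes M C" if ne: "M \<noteq> {}"
  proof
    fix c assume "c \<in> C"
    moreover obtain y where "y \<in> M" using ne by blast
    ultimately have "mix 0 y c \<in> mixes M C"
      by (intro mixesI) auto
    then show "c \<in> mixes M C"
      by simp
  qed
qed

lemma extreme_pt_mix:
  assumes x: "extreme_pt x B" and yc: "y \<in> B" "c \<in> B" and t: "t \<in> {0..1}"
    and x_eq: "x = mix t y c"
  shows "x = y \<or> x = c"
proof (cases "0 < t \<and> t < 1")
  case True
  then have "0 < t \<and> t < 1 \<and> x = mix t y c"
    using x_eq by simp
  moreover have "\<forall>y\<in>B. \<forall>z\<in>B. \<forall>t. 0 < t \<and> t < 1 \<and> x = mix t y z \<longrightarrow> y = x \<and> z = x"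
    using x unfolding extreme_pt_def by (rule conjunct2)
  ultimately show ?thesis
    using yc by (metis (no_types))
next
  case False
  then consider "t = 0" | "t = 1"
    using t by fastforce
  then show ?thesis
    by cases (simp_all add: x_eq)
qed

lemma compact_convex_hull_Un:
  assumes "compact M" "fun_convex M" "M \<subseteq> B" "compact C" "fun_convex C" "C \<subseteq> B"
    and "fun_convex B"
  obtains N where "compact N" "fun_convex N" "M \<subseteq> N" "C \<subseteq> N" "N \<subseteq> B"
    "\<And>x. x \<in> N \<Longrightarrow> extreme_pt x B \<Longrightarrow> x \<in> M \<or> x \<in> C"
proof (cases "M = {} \<or> C = {}")
  case True
  then consider "M = {}" | "C = {}"
    by blast
  then show ?thesis
  proof cases
    case 1
    show ?thesis
      by (rule that[of C]) (use assms 1 in auto)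
  next
    case 2
    show ?thesis
      by (rule that[of M]) (use assms 2 in auto)
  qed
next
  case False
  show ?thesis
  proof (rule that[of "mixes M C"])
    fix x assume x: "x \<in> mixes M C" and extreme: "extreme_pt x B"
    obtain t y c where t: "t \<in> {0..1}" and yc: "y \<in> M" "c \<in> C" and x_eq: "x = mix t y c"
      using x by (rule mixesE)
    have "x = y \<or> x = c"
      using extreme_pt_mix[OF extreme subsetD[OF assms(3) yc(1)] subsetD[OF assms(6) yc(2)] t x_eq] .
    then show "x \<in> M \<or> x \<in> C"
      using yc by auto
  qed (use False assms in \<open>simp_all add: compact_mixes fun_convex_mixes mixes_subset subset_mixes\<close>)
qed

lemma compact_convex_hull_UN:
  assumes "finite J" "fun_convex B"
    and "\<And>j. j \<in> J \<Longrightarrow> compact (C j) \<and> fun_convex (C j) \<and> C j \<subseteq> B"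
  shows "\<exists>M. compact M \<and> fun_convex M \<and> (\<Union>j\<in>J. C j) \<subseteq> M \<and> M \<subseteq> B \<and>
    (\<forall>x\<in>M. extreme_pt x B \<longrightarrow> (\<exists>j\<in>J. x \<in> C j))"
  using assms
proof (induction J rule: finite_induct)
  case empty
  show ?case
    by (intro exI[of _ "{}"]) (simp add: fun_convex_empty)
next
  case (insert j J)
  have Cj: "compact (C j)" "fun_convex (C j)" "C j \<subseteq> B"
    using insert.prems(2) by auto
  have "\<exists>M. compact M \<and> fun_convex M \<and> (\<Union>j\<in>J. C j) \<subseteq> M \<and> M \<subseteq> B \<and>
    (\<forall>x\<in>M. extreme_pt x B \<longrightarrow> (\<exists>j\<in>J. x \<in> C j))"
    by (rule insert.IH[OF insert.prems(1)]) (use insert.prems(2) in simp)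
  then obtain M where M: "compact M" "fun_convex M" "(\<Union>j\<in>J. C j) \<subseteq> M" "M \<subseteq> B"
    "\<forall>x\<in>M. extreme_pt x B \<longrightarrow> (\<exists>j\<in>J. x \<in> C j)"
    by (elim exE conjE) (rule that)
  obtain N where N: "compact N" "fun_convex N" "M \<subseteq> N" "C j \<subseteq> N" "N \<subseteq> B"
    "\<And>x. x \<in> N \<Longrightarrow> extreme_pt x B \<Longrightarrow> x \<in> M \<or> x \<in> C j"
    by (rule compact_convex_hull_Un[OF M(1,2,4) Cj insert.prems(1)]) blast
  show ?case
  proof (intro exI[of _ N] conjI)
    show "(\<Union>i\<in>insert j J. C i) \<subseteq> N"
      using M(3) N(3,4) by auto
    show "\<forall>x\<in>N. extreme_pt x B \<longrightarrow> (\<exists>i\<in>insert j J. x \<in> C i)"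
      using M(5) N(6) by blast
  qed (use N in auto)
qed

lemma extreme_pt_mem_if_generates:
  assumes B: "compact B" "fun_convex B" and K: "compact K" "K \<subseteq> B"
    and generates: "\<And>M. compact M \<Longrightarrow> fun_convex M \<Longrightarrow> K \<subseteq> M \<Longrightarrow> B \<subseteq> M"
    and g: "extreme_pt g B"
  shows "g \<in> K"
proof (rule ccontr)
  assume "g \<notin> K"
  then obtain F \<epsilon> where F: "finite F" "\<epsilon> > 0" "coord_ball F g \<epsilon> \<subseteq> - K"
    using open_contains_coord_ball[of "- K" g] compact_imp_closed_fun[OF K(1)]
    by (auto simp: open_Compl)
  define C where "C x = B \<inter> coord_cball F x (\<epsilon> / 2)" for x
  have "K \<subseteq> (\<Union>x\<in>K. coord_ball F x (\<epsilon> / 2))"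
    using F(2) by (auto simp: coord_ball_def)
  then obtain J where J: "J \<subseteq> K" "finite J" "K \<subseteq> (\<Union>x\<in>J. coord_ball F x (\<epsilon> / 2))"
    by (rule compactE_image[OF K(1) open_coord_ball[OF F(1)]]) (rule that)
  have "compact (C x) \<and> fun_convex (C x) \<and> C x \<subseteq> B" for x
    unfolding C_def using B
    by (simp add: compact_Int_closed closed_coord_cball fun_convex_Int fun_convex_coord_cball)
  then have "\<exists>M. compact M \<and> fun_convex M \<and> (\<Union>x\<in>J. C x) \<subseteq> M \<and> M \<subseteq> B \<and>
    (\<forall>y\<in>M. extreme_pt y B \<longrightarrow> (\<exists>x\<in>J. y \<in> C x))"
    by (intro compact_convex_hull_UN[OF J(2) B(2)])
  then obtain M where M: "compact M" "fun_convex M" "(\<Union>x\<in>J. C x) \<subseteq> M" "M \<subseteq> B"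
    and M_extreme: "\<forall>y\<in>M. extreme_pt y B \<longrightarrow> (\<exists>x\<in>J. y \<in> C x)"
    by (elim exE conjE) (rule that)
  have "K \<subseteq> M"
  proof
    fix k assume "k \<in> K"
    then obtain x where "x \<in> J" "k \<in> coord_ball F x (\<epsilon> / 2)"
      using J(3) by blast
    then have "k \<in> C x"
      using \<open>k \<in> K\<close> K(2) by (auto simp: C_def coord_ball_def coord_cball_def less_imp_le)
    then show "k \<in> M"
      using M(3) \<open>x \<in> J\<close> by blast
  qed
  moreover have "g \<in> B"
    using g by (simp add: extreme_pt_def)
  ultimately have "g \<in> M"
    using generates[OF M(1,2)] by blast
  then obtain x where "x \<in> J" "g \<in> C x"
    using M_extreme g by blast
  have "x \<in> coord_ball F g \<epsilon>"
    unfolding coord_ball_def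
  proof (intro CollectI ballI)
    fix a assume "a \<in> F"
    then have "\<bar>g a - x a\<bar> \<le> \<epsilon> / 2"
      using \<open>g \<in> C x\<close> by (simp add: C_def coord_cball_def)
    then show "\<bar>x a - g a\<bar> < \<epsilon>"
      using F(2) abs_minus_commute[of "x a" "g a"] by linarith
  qed
  then show False
    using F(3) J(1) \<open>x \<in> J\<close> by blast
qed

lemma nearest_point_obtuse:
  assumes "fun_convex M" "p \<in> M" "x \<in> M"
    and nearest: "\<And>y. y \<in> M \<Longrightarrow> (\<Sum>a\<in>F. (p a - h a)\<^sup>2) \<le> (\<Sum>a\<in>F. (y a - h a)\<^sup>2)"
  shows "0 \<le> (\<Sum>a\<in>F. (x a - p a) * (p a - h a))"
proof -
  define A where "A = (\<Sum>a\<in>F. (x a - p a) * (p a - h a))"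
  define Q where "Q = (\<Sum>a\<in>F. (x a - p a)\<^sup>2)"
  have "0 \<le> 2 * A + t * Q" if t: "0 < t" "t \<le> 1" for t
  proof -
    have "mix t x p \<in> M"
      using fun_convexD[OF assms(1,3,2)] t by simp
    then have "(\<Sum>a\<in>F. (p a - h a)\<^sup>2) \<le> (\<Sum>a\<in>F. (t * x a + (1 - t) * p a - h a)\<^sup>2)"
      using nearest by simp
    also have "\<dots> = (\<Sum>a\<in>F. (p a - h a)\<^sup>2 + t * (2 * ((x a - p a) * (p a - h a)) + t * (x a - p a)\<^sup>2))"
      by (rule sum.cong) (simp_all add: power2_eq_square algebra_simps)
    also have "\<dots> = (\<Sum>a\<in>F. (p a - h a)\<^sup>2) + t * (2 * A + t * Q)"
      unfolding A_def Q_def by (simp add: sum.distrib sum_distrib_left distrib_left)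
    finally have "0 \<le> t * (2 * A + t * Q)"
      by simp
    then show ?thesis
      using t by (simp add: zero_le_mult_iff)
  qed
  then have "\<forall>\<^sub>F t in at_right 0. 0 \<le> 2 * A + t * Q"
    unfolding eventually_at_right_field by (intro exI[of _ 1]) auto
  moreover have "((\<lambda>t. 2 * A + t * Q) \<longlongrightarrow> 2 * A + 0 * Q) (at_right 0)"
    by (intro tendsto_intros)
  ultimately have "0 \<le> 2 * A"
    by (intro tendsto_lowerbound) (auto simp: trivial_limit_at_right_real)
  then show ?thesis
    unfolding A_def by simp
qed

lemma pairing_eq_sum_superset:
  assumes "finite F" "supp \<phi> \<subseteq> F"
  shows "pairing x \<phi> = (\<Sum>a\<in>F. x a * \<phi> a)"
  unfolding pairing_def
  by (rule sum.mono_neutral_left) (use assms in \<open>auto simp: supp_def\<close>)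

lemma separate_point_compact_convex:
  assumes "compact M" "fun_convex M" "h \<notin> M"
  obtains \<phi> c where "fin_supp \<phi>" "\<And>x. x \<in> M \<Longrightarrow> pairing x \<phi> \<le> c" "c < pairing h \<phi>"
proof (cases "M = {}")
  case True
  show ?thesis
    by (rule that[of "\<lambda>_. 0" "-1"]) (auto simp: True fin_supp_def supp_def pairing_def)
next
  case False
  obtain F \<epsilon> where F: "finite F" "\<epsilon> > 0" "coord_ball F h \<epsilon> \<subseteq> - M"
    using open_contains_coord_ball[of "- M" h] compact_imp_closed_fun[OF assms(1)] assms(3)
    by (auto simp: open_Compl)
  define q where "q y = (\<Sum>a\<in>F. (y a - h a)\<^sup>2)" for y :: "'a \<Rightarrow> real"
  have "continuous_on M q"
    unfolding q_def
    by (intro continuous_intros continuous_on_product_then_coordinatewise continuous_on_id)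
  then obtain p where p: "p \<in> M" "\<And>y. y \<in> M \<Longrightarrow> q p \<le> q y"
    using continuous_attains_inf[OF assms(1) False] by blast
  have "p \<notin> coord_ball F h \<epsilon>"
    using F(3) p(1) by auto
  then obtain b where b: "b \<in> F" "\<epsilon> \<le> \<bar>p b - h b\<bar>"
    by (auto simp: coord_ball_def not_less)
  have "0 < q p"
    unfolding q_def using F(1,2) b by (intro sum_pos2[of F b]) auto
  define \<phi> where "\<phi> a = (if a \<in> F then h a - p a else 0)" for a
  have "supp \<phi> \<subseteq> F"
    unfolding supp_def \<phi>_def by auto
  then have fin: "fin_supp \<phi>"
    using F(1) finite_subset unfolding fin_supp_def by blast
  have pairing_\<phi>: "pairing y \<phi> = (\<Sum>a\<in>F. y a * (h a - p a))" for y
    unfolding pairing_eq_sum_superset[OF F(1) \<open>supp \<phi> \<subseteq> F\<close>] by (rule sum.cong) (auto simp: \<phi>_def)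
  show ?thesis
  proof (rule that[OF fin])
    fix x assume "x \<in> M"
    have "pairing p \<phi> - pairing x \<phi> = (\<Sum>a\<in>F. (x a - p a) * (p a - h a))"
      unfolding pairing_\<phi> sum_subtractf[symmetric] by (rule sum.cong) (simp_all add: algebra_simps)
    also have "\<dots> \<ge> 0"
      using nearest_point_obtuse[OF assms(2) p(1) \<open>x \<in> M\<close>] p(2) unfolding q_def by blast
    finally show "pairing x \<phi> \<le> pairing p \<phi>"
      by simp
  next
    have "pairing h \<phi> - pairing p \<phi> = q p"
      unfolding pairing_\<phi> q_def sum_subtractf[symmetric]
      by (rule sum.cong) (simp_all add: power2_eq_square algebra_simps)
    then show "pairing p \<phi> < pairing h \<phi>"
      using \<open>0 < q p\<close> by simp
  qed
qed

definition js_sums :: "'a set set \<Rightarrow> ('a \<Rightarrow> real) \<Rightarrow> real set" where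
  "js_sums S \<phi> = {(\<Sum>i<n. (setsum \<phi> (s i))\<^sup>2) | (n::nat) s.
     (\<forall>i<n. s i \<in> S) \<and> (\<forall>i<n. \<forall>j<n. i \<noteq> j \<longrightarrow> s i \<inter> s j = {})}"

lemma js_norm_js_sums: "js_norm S \<phi> = sqrt (Sup (js_sums S \<phi>))"
  unfolding js_norm_def js_sums_def ..

lemma zero_in_js_sums: "0 \<in> js_sums S \<phi>"
  unfolding js_sums_def by (intro CollectI exI[of _ "0::nat"]) auto

lemma js_sums_nonempty: "js_sums S \<phi> \<noteq> {}"
  using zero_in_js_sums by blast

lemma js_sums_nonneg: "x \<in> js_sums S \<phi> \<Longrightarrow> 0 \<le> x"
  unfolding js_sums_def by (auto intro: sum_nonneg)

lemma js_sums_le_sum_abs_squared: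
  assumes "fin_supp \<phi>" "x \<in> js_sums S \<phi>"
  shows "x \<le> (\<Sum>a\<in>supp \<phi>. \<bar>\<phi> a\<bar>)\<^sup>2"
proof -
  let ?T = "\<Sum>a\<in>supp \<phi>. \<bar>\<phi> a\<bar>"
  have fin: "finite (supp \<phi>)"
    using assms(1) by (simp add: fin_supp_def)
  obtain n :: nat and s where x: "x = (\<Sum>i<n. (setsum \<phi> (s i))\<^sup>2)"
    and disj: "\<forall>i<n. \<forall>j<n. i \<noteq> j \<longrightarrow> s i \<inter> s j = {}"
    using assms(2) unfolding js_sums_def by blast
  define c where "c i = (\<Sum>a\<in>s i \<inter> supp \<phi>. \<bar>\<phi> a\<bar>)" for i
  have abs_le_c: "\<bar>setsum \<phi> (s i)\<bar> \<le> c i" for i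
    unfolding setsum_def c_def by (rule sum_abs)
  have c_le: "c i \<le> ?T" for i
    unfolding c_def by (rule sum_mono2) (use fin in auto)
  have "(\<Sum>i<n. c i) = (\<Sum>a\<in>(\<Union>i<n. s i \<inter> supp \<phi>). \<bar>\<phi> a\<bar>)"
    unfolding c_def by (subst sum.UNION_disjoint) (use fin disj in auto)
  also have "\<dots> \<le> ?T"
    by (rule sum_mono2) (use fin in auto)
  finally have sum_c: "(\<Sum>i<n. c i) \<le> ?T" .
  have "x \<le> (\<Sum>i<n. c i * ?T)"
    unfolding x
  proof (rule sum_mono)
    fix i
    have "(setsum \<phi> (s i))\<^sup>2 = \<bar>setsum \<phi> (s i)\<bar> * \<bar>setsum \<phi> (s i)\<bar>"
      by (simp add: power2_eq_square)
    also have "\<dots> \<le> c i * ?T"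
      using abs_le_c[of i] c_le[of i] by (intro mult_mono) auto
    finally show "(setsum \<phi> (s i))\<^sup>2 \<le> c i * ?T" .
  qed
  also have "\<dots> = (\<Sum>i<n. c i) * ?T"
    by (simp add: sum_distrib_right)
  also have "\<dots> \<le> ?T * ?T"
    using sum_c by (intro mult_right_mono) (auto intro: sum_nonneg)
  finally show ?thesis
    by (simp add: power2_eq_square)
qed

lemma bdd_above_js_sums: "fin_supp \<phi> \<Longrightarrow> bdd_above (js_sums S \<phi>)"
  using js_sums_le_sum_abs_squared unfolding bdd_above_def by blast

lemma js_norm_le_sum_abs:
  assumes "fin_supp \<phi>"
  shows "js_norm S \<phi> \<le> (\<Sum>a\<in>supp \<phi>. \<bar>\<phi> a\<bar>)"
proof -
  have "Sup (js_sums S \<phi>) \<le> (\<Sum>a\<in>supp \<phi>. \<bar>\<phi> a\<bar>)\<^sup>2"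
    by (rule cSup_least[OF js_sums_nonempty]) (rule js_sums_le_sum_abs_squared[OF assms])
  then show ?thesis
    unfolding js_norm_js_sums by (intro real_le_lsqrt sum_nonneg) auto
qed

lemma pairing_indicator_sum:
  assumes "fin_supp \<phi>"
  shows "pairing (\<lambda>a. \<Sum>i<n. lam i * indicator (s i) a) \<phi> = (\<Sum>i<n. lam i * setsum \<phi> (s i))"
proof -
  have fin: "finite (supp \<phi>)"
    using assms by (simp add: fin_supp_def)
  have "pairing (\<lambda>a. \<Sum>i<n. lam i * indicator (s i) a) \<phi>
      = (\<Sum>i<n. lam i * (\<Sum>a\<in>supp \<phi>. indicator (s i) a * \<phi> a))"
    unfolding pairing_def
    by (simp add: sum_distrib_right sum_distrib_left mult.assoc sum.swap[of _ "supp \<phi>"])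
  also have "\<dots> = (\<Sum>i<n. lam i * setsum \<phi> (s i))"
  proof (rule sum.cong[OF refl])
    fix i
    have "(\<Sum>a\<in>supp \<phi>. indicator (s i) a * \<phi> a) = (\<Sum>a\<in>s i \<inter> supp \<phi>. \<phi> a)"
      by (subst Int_commute, subst sum.inter_restrict[OF fin]) (auto simp: indicator_def intro!: sum.cong)
    then show "lam i * (\<Sum>a\<in>supp \<phi>. indicator (s i) a * \<phi> a) = lam i * setsum \<phi> (s i)"
      by (simp add: setsum_def)
  qed
  finally show ?thesis .
qed

lemma D_set_subset_dual_ball: "D_set S \<subseteq> dual_ball S"
proof
  fix d assume "d \<in> D_set S"
  then obtain n :: nat and lam s where d: "d = (\<lambda>a. \<Sum>i<n. lam i * indicator (s i) a)"
    and family: "\<forall>i<n. s i \<in> S" "\<forall>i<n. \<forall>j<n. i \<noteq> j \<longrightarrow> s i \<inter> s j = {}"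
    and lam: "(\<Sum>i<n. (lam i)\<^sup>2) \<le> 1"
    unfolding D_set_def by blast
  show "d \<in> dual_ball S"
    unfolding dual_ball_def
  proof (intro CollectI allI impI)
    fix \<phi> :: "'a \<Rightarrow> real" assume \<phi>: "fin_supp \<phi>"
    have "(pairing d \<phi>)\<^sup>2 = (\<Sum>i<n. lam i * setsum \<phi> (s i))\<^sup>2"
      unfolding d pairing_indicator_sum[OF \<phi>] ..
    also have "\<dots> \<le> (\<Sum>i<n. (lam i)\<^sup>2) * (\<Sum>i<n. (setsum \<phi> (s i))\<^sup>2)"
      by (rule Cauchy_Schwarz_ineq_sum)
    also have "\<dots> \<le> (\<Sum>i<n. (setsum \<phi> (s i))\<^sup>2)"
      using lam by (intro mult_left_le_one_le sum_nonneg) auto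
    also have "\<dots> \<le> Sup (js_sums S \<phi>)"
      using family by (intro cSup_upper bdd_above_js_sums[OF \<phi>]) (auto simp: js_sums_def)
    finally show "\<bar>pairing d \<phi>\<bar> \<le> js_norm S \<phi>"
      unfolding js_norm_js_sums using real_le_rsqrt[of "\<bar>pairing d \<phi>\<bar>"] by simp
  qed
qed

text \<open>D norms JS: for a disjoint family s and N^2 = (\<Sum>i. (setsum phi (s i))^2), the coefficients
  setsum phi (s i) / N give an element of D whose pairing with phi is N.\<close>

lemma js_norm_le_if_pairing_D_set_le:
  assumes \<phi>: "fin_supp \<phi>" and bound: "\<And>d. d \<in> D_set S \<Longrightarrow> pairing d \<phi> \<le> v"
  shows "js_norm S \<phi> \<le> v"
proof -
  have sqrt_le: "sqrt x \<le> v" if x_in: "x \<in> js_sums S \<phi>" for x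
  proof -
    obtain n :: nat and s where x: "x = (\<Sum>i<n. (setsum \<phi> (s i))\<^sup>2)"
      and family: "\<forall>i<n. s i \<in> S" "\<forall>i<n. \<forall>j<n. i \<noteq> j \<longrightarrow> s i \<inter> s j = {}"
      using x_in unfolding js_sums_def by blast
    have x0: "0 \<le> x"
      using x_in by (rule js_sums_nonneg)
    define lam where "lam i = setsum \<phi> (s i) / sqrt x" for i
    have "(\<Sum>i<n. (lam i)\<^sup>2) = x / x"
      using x0 unfolding lam_def by (simp add: power_divide sum_divide_distrib[symmetric] x[symmetric])
    then have "(\<lambda>a. \<Sum>i<n. lam i * indicator (s i) a) \<in> D_set S"
      unfolding D_set_def using family by (intro CollectI exI conjI) auto
    then have "pairing (\<lambda>a. \<Sum>i<n. lam i * indicator (s i) a) \<phi> \<le> v"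
      by (rule bound)
    then have "(\<Sum>i<n. lam i * setsum \<phi> (s i)) \<le> v"
      unfolding pairing_indicator_sum[OF \<phi>] .
    moreover have "(\<Sum>i<n. lam i * setsum \<phi> (s i)) = x / sqrt x"
      unfolding lam_def x by (simp add: sum_divide_distrib power2_eq_square)
    moreover have "x / sqrt x = sqrt x"
      using x0 by (rule real_div_sqrt)
    ultimately show ?thesis
      by simp
  qed
  have "0 \<le> v"
    using sqrt_le[OF zero_in_js_sums] by simp
  moreover have "Sup (js_sums S \<phi>) \<le> v\<^sup>2"
    by (rule cSup_least[OF js_sums_nonempty]) (rule sqrt_le_D[OF sqrt_le])
  ultimately show ?thesis
    unfolding js_norm_js_sums by (rule real_le_lsqrt)
qed

lemma pairing_mix: "pairing (mix t x y) \<phi> = t * pairing x \<phi> + (1 - t) * pairing y \<phi>"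
  unfolding pairing_def by (simp add: sum.distrib sum_distrib_left distrib_right mult.assoc)

lemma closed_dual_ball: "closed (dual_ball S)"
proof -
  have "dual_ball S = (\<Inter>\<phi>\<in>{\<phi>. fin_supp \<phi>}. {g. \<bar>pairing g \<phi>\<bar> \<le> js_norm S \<phi>})"
    unfolding dual_ball_def by auto
  moreover have "closed {g. \<bar>pairing g \<phi>\<bar> \<le> js_norm S \<phi>}" for \<phi>
    unfolding pairing_def
    by (intro closed_Collect_le continuous_intros continuous_on_product_then_coordinatewise
        continuous_on_id)
  ultimately show ?thesis
    by auto
qed

lemma fun_convex_dual_ball: "fun_convex (dual_ball S)"
  unfolding fun_convex_def
proof (intro ballI allI impI)
  fix x y and t :: real
  assume "x \<in> dual_ball S" "y \<in> dual_ball S" "0 \<le> t \<and> t \<le> 1"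
  then show "mix t x y \<in> dual_ball S"
    unfolding dual_ball_def by (auto simp: pairing_mix intro!: abs_convex_combination_le)
qed

lemma abs_le_one_if_in_dual_ball:
  assumes "g \<in> dual_ball S"
  shows "\<bar>g a\<bar> \<le> 1"
proof -
  define e where "e = (\<lambda>b. if b = a then 1 else (0::real))"
  have supp_e: "supp e = {a}"
    unfolding e_def supp_def by auto
  then have e: "fin_supp e"
    unfolding fin_supp_def by simp
  have "\<bar>g a\<bar> = \<bar>pairing g e\<bar>"
    unfolding pairing_def supp_e by (simp add: e_def)
  also have "\<dots> \<le> js_norm S e"
    using assms e unfolding dual_ball_def by blast
  also have "\<dots> \<le> 1"
    using js_norm_le_sum_abs[OF e] unfolding supp_e by (simp add: e_def)
  finally show ?thesis .
qed

lemma compact_dual_ball: "compact (dual_ball S)"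
proof -
  have "compactin (product_topology (\<lambda>_. euclidean) UNIV) (Pi\<^sub>E UNIV (\<lambda>_::'a. {-1..1::real}))"
    by (simp add: compactin_PiE)
  then have "compact (Pi\<^sub>E UNIV (\<lambda>_::'a. {-1..1::real}))"
    by (simp add: euclidean_product_topology)
  moreover have "dual_ball S = Pi\<^sub>E UNIV (\<lambda>_. {-1..1}) \<inter> dual_ball S"
    using abs_le_one_if_in_dual_ball by (fastforce simp: abs_le_iff)
  ultimately show ?thesis
    using compact_Int_closed closed_dual_ball by metis
qed

lemma dual_ball_subset_compact_convex:
  assumes "compact M" "fun_convex M" "D_set S \<subseteq> M"
  shows "dual_ball S \<subseteq> M"
proof
  fix h assume h: "h \<in> dual_ball S"
  show "h \<in> M"
  proof (rule ccontr)
    assume "h \<notin> M"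
    then obtain \<phi> c where \<phi>: "fin_supp \<phi>" "\<And>x. x \<in> M \<Longrightarrow> pairing x \<phi> \<le> c" "c < pairing h \<phi>"
      using separate_point_compact_convex[OF assms(1,2)] by blast
    have "js_norm S \<phi> \<le> c"
      using js_norm_le_if_pairing_D_set_le[OF \<phi>(1)] \<phi>(2) assms(3) by blast
    moreover have "\<bar>pairing h \<phi>\<bar> \<le> js_norm S \<phi>"
      using h \<phi>(1) unfolding dual_ball_def by blast
    ultimately show False
      using \<phi>(3) by linarith
  qed
qed

theorem lemma2p3:
  fixes S :: "'a set set"
  assumes "\<forall>a. {a} \<in> S"
  shows "{g. extreme_pt g (dual_ball S)} \<subseteq> closure (D_set S)"
proof
  fix g assume "g \<in> {g. extreme_pt g (dual_ball S)}"
  then have g: "extreme_pt g (dual_ball S)"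
    by simp
  have closure_D: "closure (D_set S) \<subseteq> dual_ball S"
    by (rule closure_minimal[OF D_set_subset_dual_ball closed_dual_ball])
  show "g \<in> closure (D_set S)"
  proof (rule extreme_pt_mem_if_generates[OF compact_dual_ball fun_convex_dual_ball _ closure_D _ g])
    show "compact (closure (D_set S))"
      using compact_Int_closed[OF compact_dual_ball closed_closure] closure_D
      by (metis inf.absorb_iff2)
  next
    fix M assume "compact M" "fun_convex M" "closure (D_set S) \<subseteq> M"
    then show "dual_ball S \<subseteq> M"
      using dual_ball_subset_compact_convex closure_subset by blast
  qed
qed

end
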